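(* For $n\ge1$ let $R_n=\{(x,y)\in\mathbb R^2: x-1/n<y<x+1/n\}$, and let $R$ be the pro-set given by the inverse system $(R_n)_{n\ge1}$ with inclusion maps, equipped with the monomorphism $R\to\mathbb R\times\mathbb R$ in $\operatorname{Pro}(\mathbf{Set})$ induced by the inclusions $R_n\subseteq\mathbb R^2$. Then $R$ is a categorical equivalence relation on $\mathbb R$ in $\operatorname{Pro}(\mathbf{Set})$, but it is not the kernel pair of any morphism in $\operatorname{Pro}(\mathbf{Set})$: every morphism $f\colon\mathbb R\to X$ in $\operatorname{Pro}(\mathbf{Set})$ whose kernel pair contains $R$ has kernel pair all of $\mathbb R\times\mathbb R$, while $R\to\mathbb R\times\mathbb R$ is not an isomorphism. In particular, $\operatorname{Pro}(\mathbf{Set})$ is not Barr exact.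
   Context: For a category $\mathcal C$, $\operatorname{Pro}(\mathcal C)$ is its pro-completion: objects are inverse systems, i.e. functors $X\colon \mathcal I_X^{op}\to\mathcal C$ with $\mathcal I_X$ a small filtered category, and $\operatorname{Hom}_{\operatorname{Pro}(\mathcal C)}(X,Y)=\varprojlim_{j\in\mathcal I_Y}\varinjlim_{i\in\mathcal I_X}\mathcal C(X_i,Y_j)$; sets are regarded as one-index inverse systems. A categorical equivalence relation on an object $X$ of a finitely complete category $\mathcal C$ is a monomorphism $R\to X\times X$ such that $\mathcal C(U,R)$ is an equivalence relation on $\mathcal C(U,X)$ for all $U$. The kernel pair of $f\colon X\to Y$ is the pullback $X\times_YX\to X\times X$. A regular category is Barr exact if every categorical equivalence relation is a kernel pair. *)

theory Defs
  imports Complex_Main "HOL-Library.FuncSet"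
begin

record ('o, 'm) category =
  Ob :: "'o set"
  Ar :: "'m set"
  cdom :: "'m \<Rightarrow> 'o"
  ccod :: "'m \<Rightarrow> 'o"
  cid :: "'o \<Rightarrow> 'm"
  ccomp :: "'m \<Rightarrow> 'm \<Rightarrow> 'm"   (* ccomp C g f = g o f *)

definition chom :: "('o, 'm) category \<Rightarrow> 'o \<Rightarrow> 'o \<Rightarrow> 'm set" where
  "chom C i j = {u \<in> Ar C. cdom C u = i \<and> ccod C u = j}"

definition is_category :: "('o, 'm) category \<Rightarrow> bool" where
  "is_category C \<longleftrightarrow>
     (\<forall>u\<in>Ar C. cdom C u \<in> Ob C \<and> ccod C u \<in> Ob C) \<and>
     (\<forall>i\<in>Ob C. cid C i \<in> chom C i i) \<and>
     (\<forall>u\<in>Ar C. \<forall>v\<in>Ar C. ccod C u = cdom C v \<longrightarrow>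
         ccomp C v u \<in> chom C (cdom C u) (ccod C v)) \<and>
     (\<forall>u\<in>Ar C. ccomp C (cid C (ccod C u)) u = u \<and> ccomp C u (cid C (cdom C u)) = u) \<and>
     (\<forall>u\<in>Ar C. \<forall>v\<in>Ar C. \<forall>w\<in>Ar C. ccod C u = cdom C v \<longrightarrow> ccod C v = cdom C w \<longrightarrow>
         ccomp C w (ccomp C v u) = ccomp C (ccomp C w v) u)"

definition is_filtered :: "('o, 'm) category \<Rightarrow> bool" where
  "is_filtered C \<longleftrightarrow> is_category C \<and> Ob C \<noteq> {} \<and>
     (\<forall>i\<in>Ob C. \<forall>j\<in>Ob C. \<exists>k\<in>Ob C. chom C i k \<noteq> {} \<and> chom C j k \<noteq> {}) \<and>
     (\<forall>i\<in>Ob C. \<forall>j\<in>Ob C. \<forall>u\<in>chom C i j. \<forall>v\<in>chom C i j.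
         \<exists>k\<in>Ob C. \<exists>w\<in>chom C j k. ccomp C w u = ccomp C w v)"

section \<open>Pro-sets: functors I^op -> Set, I small filtered\<close>

record ('o, 'm, 'a) proset =
  idx :: "('o, 'm) category"
  obj :: "'o \<Rightarrow> 'a set"
  amap :: "'m \<Rightarrow> 'a \<Rightarrow> 'a"   (* u : i -> k gives amap u : obj k -> obj i *)

definition is_proset :: "('o, 'm, 'a) proset \<Rightarrow> bool" where
  "is_proset X \<longleftrightarrow> is_filtered (idx X) \<and>
     (\<forall>u\<in>Ar (idx X). amap X u \<in> obj X (ccod (idx X) u) \<rightarrow> obj X (cdom (idx X) u)) \<and>
     (\<forall>i\<in>Ob (idx X). \<forall>x\<in>obj X i. amap X (cid (idx X) i) x = x) \<and>
     (\<forall>u\<in>Ar (idx X). \<forall>v\<in>Ar (idx X). ccod (idx X) u = cdom (idx X) v \<longrightarrow>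
        (\<forall>x\<in>obj X (ccod (idx X) v).
            amap X (ccomp (idx X) v u) x = amap X u (amap X v x)))"

text \<open>Elements of the filtered colimit colim_i Set(X_i, S), represented by
  germs (i, phi); equality of germs in the colimit:\<close>
definition germ_eq :: "('o, 'm, 'a) proset \<Rightarrow> 'o \<times> ('a \<Rightarrow> 'b) \<Rightarrow> 'o \<times> ('a \<Rightarrow> 'b) \<Rightarrow> bool" where
  "germ_eq X g g' \<longleftrightarrow>
     (\<exists>k\<in>Ob (idx X). \<exists>u\<in>chom (idx X) (fst g) k. \<exists>u'\<in>chom (idx X) (fst g') k.
        \<forall>x\<in>obj X k. snd g (amap X u x) = snd g' (amap X u' x))"

text \<open>A representative of an element of Hom(X,Y) = lim_j colim_i Set(X_i,Y_j):
  a compatible family of germs indexed by the objects j of the index of Y.\<close>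
definition is_pmor :: "('o, 'm, 'a) proset \<Rightarrow> ('p, 'q, 'b) proset \<Rightarrow> ('p \<Rightarrow> 'o \<times> ('a \<Rightarrow> 'b)) \<Rightarrow> bool" where
  "is_pmor X Y F \<longleftrightarrow>
     (\<forall>j\<in>Ob (idx Y). fst (F j) \<in> Ob (idx X) \<and> snd (F j) \<in> obj X (fst (F j)) \<rightarrow> obj Y j) \<and>
     (\<forall>v\<in>Ar (idx Y).
        germ_eq X (fst (F (ccod (idx Y) v)), amap Y v \<circ> snd (F (ccod (idx Y) v))) (F (cdom (idx Y) v)))"

definition pmor_eq :: "('o, 'm, 'a) proset \<Rightarrow> ('p, 'q, 'b) proset \<Rightarrow> ('p \<Rightarrow> 'o \<times> ('a \<Rightarrow> 'b)) \<Rightarrow> ('p \<Rightarrow> 'o \<times> ('a \<Rightarrow> 'b)) \<Rightarrow> bool" where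
  "pmor_eq X Y F G \<longleftrightarrow> (\<forall>j\<in>Ob (idx Y). germ_eq X (F j) (G j))"

definition pcomp :: "('r \<Rightarrow> 'p \<times> ('b \<Rightarrow> 'c)) \<Rightarrow> ('p \<Rightarrow> 'o \<times> ('a \<Rightarrow> 'b)) \<Rightarrow> 'r \<Rightarrow> 'o \<times> ('a \<Rightarrow> 'c)" where
  "pcomp G F = (\<lambda>k. (fst (F (fst (G k))), snd (G k) \<circ> snd (F (fst (G k)))))"

definition pid :: "'o \<Rightarrow> 'o \<times> ('a \<Rightarrow> 'a)" where
  "pid = (\<lambda>i. (i, id))"

definition unit_cat :: "(unit, unit) category" where
  "unit_cat = \<lparr>Ob = {()}, Ar = {()}, cdom = (\<lambda>_. ()), ccod = (\<lambda>_. ()),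
               cid = (\<lambda>_. ()), ccomp = (\<lambda>_ _. ())\<rparr>"

definition const_pro :: "'a set \<Rightarrow> (unit, unit, 'a) proset" where
  "const_pro S = \<lparr>idx = unit_cat, obj = (\<lambda>_. S), amap = (\<lambda>_ x. x)\<rparr>"

definition pfst :: "unit \<Rightarrow> unit \<times> ('x \<times> 'x \<Rightarrow> 'x)" where
  "pfst = (\<lambda>_. ((), fst))"
definition psnd :: "unit \<Rightarrow> unit \<times> ('x \<times> 'x \<Rightarrow> 'x)" where
  "psnd = (\<lambda>_. ((), snd))"

text \<open>For m : R -> S x S: Hom(U,m) is injective and its image is an equivalence
  relation on Hom(U,S) (using Hom(U, S x S) = Hom(U,S) x Hom(U,S)).\<close>
definition eqrel_wrt :: "('o, 'm, 'a) proset \<Rightarrow> ('r, 's, 'c) proset \<Rightarrow> 'x set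
     \<Rightarrow> (unit \<Rightarrow> 'r \<times> ('c \<Rightarrow> 'x \<times> 'x)) \<Rightarrow> bool" where
  "eqrel_wrt U Rp S m \<longleftrightarrow>
     (\<forall>r s. is_pmor U Rp r \<longrightarrow> is_pmor U Rp s \<longrightarrow>
        pmor_eq U (const_pro (S \<times> S)) (pcomp m r) (pcomp m s) \<longrightarrow> pmor_eq U Rp r s) \<and>
     (let Rel = (\<lambda>a b. \<exists>r. is_pmor U Rp r \<and>
                   pmor_eq U (const_pro S) (pcomp pfst (pcomp m r)) a \<and>
                   pmor_eq U (const_pro S) (pcomp psnd (pcomp m r)) b);
          H = {a. is_pmor U (const_pro S) a} in
       (\<forall>a\<in>H. Rel a a) \<and>
       (\<forall>a\<in>H. \<forall>b\<in>H. Rel a b \<longrightarrow> Rel b a) \<and>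
       (\<forall>a\<in>H. \<forall>b\<in>H. \<forall>c\<in>H. Rel a b \<longrightarrow> Rel b c \<longrightarrow> Rel a c))"

definition Rcat :: "(nat, nat \<times> nat) category" where
  "Rcat = \<lparr>Ob = {n. 1 \<le> n}, Ar = {(a, b). 1 \<le> a \<and> a \<le> b}, cdom = fst, ccod = snd,
           cid = (\<lambda>n. (n, n)), ccomp = (\<lambda>g f. (fst f, snd g))\<rparr>"

definition Rset :: "nat \<Rightarrow> (real \<times> real) set" where
  "Rset n = {(x, y). x - 1 / real n < y \<and> y < x + 1 / real n}"

definition Rpro :: "(nat, nat \<times> nat, real \<times> real) proset" where
  "Rpro = \<lparr>idx = Rcat, obj = Rset, amap = (\<lambda>_ p. p)\<rparr>"

definition incl :: "unit \<Rightarrow> nat \<times> (real \<times> real \<Rightarrow> real \<times> real)" where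
  "incl = (\<lambda>_. (1, id))"

end

theory Submission
  imports Defs
begin

text \<open>A morphism U \<rightarrow> R picks, for every n, a germ landing in the band R_n; projecting
  it to \<real> \<times> \<real> gives two germs a, b that are "1/n-close for every n". Since R_n is
  symmetric, contains the diagonal and R_2n \<circ> R_2n \<subseteq> R_n, this closeness is an equivalence
  relation, so R is an equivalence relation on \<real>. On the other hand a map h out of \<real>
  that identifies the points of one band R_n is constant on intervals of length 1/n, hence
  constant; so the kernel pair of any morphism whose kernel pair contains R is all of
  \<real> \<times> \<real>. Finally R \<rightarrow> \<real> \<times> \<real> has no inverse, because no map from \<real> \<times> \<real> into R_1 can
  be the identity.\<close>

lemma germ_eq_sym: "germ_eq X g g' \<Longrightarrow> germ_eq X g' g"
  unfolding germ_eq_def by metis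

definition germ_map :: "('b \<Rightarrow> 'c) \<Rightarrow> 'o \<times> ('a \<Rightarrow> 'b) \<Rightarrow> 'o \<times> ('a \<Rightarrow> 'c)" where
  "germ_map h g = (fst g, h \<circ> snd g)"

definition germ_into :: "('o, 'm, 'a) proset \<Rightarrow> 'b set \<Rightarrow> 'o \<times> ('a \<Rightarrow> 'b) \<Rightarrow> bool" where
  "germ_into X S g \<longleftrightarrow> fst g \<in> Ob (idx X) \<and> snd g \<in> obj X (fst g) \<rightarrow> S"

lemma germ_eq_germ_map: "germ_eq X g g' \<Longrightarrow> germ_eq X (germ_map h g) (germ_map h g')"
  unfolding germ_eq_def germ_map_def by simp metis

locale pro_set =
  fixes U :: "('o, 'm, 'a) proset"
  assumes is_proset: "is_proset U"
begin

lemma chom_Ob: "u \<in> chom (idx U) i k \<Longrightarrow> i \<in> Ob (idx U) \<and> k \<in> Ob (idx U)"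
  using is_proset unfolding is_proset_def is_filtered_def is_category_def chom_def by auto

lemma ccomp_chom:
  "u \<in> chom (idx U) i j \<Longrightarrow> v \<in> chom (idx U) j k \<Longrightarrow> ccomp (idx U) v u \<in> chom (idx U) i k"
  using is_proset unfolding is_proset_def is_filtered_def is_category_def chom_def by auto

lemma ccomp_assoc:
  "u \<in> chom (idx U) i j \<Longrightarrow> v \<in> chom (idx U) j k \<Longrightarrow> w \<in> chom (idx U) k l \<Longrightarrow>
     ccomp (idx U) w (ccomp (idx U) v u) = ccomp (idx U) (ccomp (idx U) w v) u"
  using is_proset unfolding is_proset_def is_filtered_def is_category_def chom_def by auto

lemma cid_chom: "i \<in> Ob (idx U) \<Longrightarrow> cid (idx U) i \<in> chom (idx U) i i"
  using is_proset unfolding is_proset_def is_filtered_def is_category_def chom_def by auto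

lemma amap_mem: "u \<in> chom (idx U) i k \<Longrightarrow> x \<in> obj U k \<Longrightarrow> amap U u x \<in> obj U i"
  using is_proset unfolding is_proset_def chom_def by auto

lemma amap_ccomp:
  "u \<in> chom (idx U) i j \<Longrightarrow> v \<in> chom (idx U) j k \<Longrightarrow> x \<in> obj U k \<Longrightarrow>
     amap U (ccomp (idx U) v u) x = amap U u (amap U v x)"
  using is_proset unfolding is_proset_def chom_def by auto

lemma amap_cid: "i \<in> Ob (idx U) \<Longrightarrow> x \<in> obj U i \<Longrightarrow> amap U (cid (idx U) i) x = x"
  using is_proset unfolding is_proset_def by auto

lemma cocone:
  assumes "i \<in> Ob (idx U)" "j \<in> Ob (idx U)"
  obtains k a b where "a \<in> chom (idx U) i k" "b \<in> chom (idx U) j k"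
  using assms is_proset unfolding is_proset_def is_filtered_def by blast

lemma equalizer:
  assumes "u \<in> chom (idx U) i j" "v \<in> chom (idx U) i j"
  obtains k w where "w \<in> chom (idx U) j k" "ccomp (idx U) w u = ccomp (idx U) w v"
  using assms chom_Ob[OF assms(1)] is_proset unfolding is_proset_def is_filtered_def by blast

lemma span_completion:
  assumes u: "u \<in> chom (idx U) i k" and v: "v \<in> chom (idx U) i k'"
  obtains m a b where "a \<in> chom (idx U) k m" "b \<in> chom (idx U) k' m"
    "ccomp (idx U) a u = ccomp (idx U) b v"
proof -
  obtain n a b where ab: "a \<in> chom (idx U) k n" "b \<in> chom (idx U) k' n"
    using cocone chom_Ob u v by metis
  obtain m w where w: "w \<in> chom (idx U) n m"
    "ccomp (idx U) w (ccomp (idx U) a u) = ccomp (idx U) w (ccomp (idx U) b v)"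
    using equalizer ccomp_chom ab u v by metis
  have "ccomp (idx U) (ccomp (idx U) w a) u = ccomp (idx U) (ccomp (idx U) w b) v"
    using w(2) ccomp_assoc ab u v w(1) by metis
  then show thesis using that ccomp_chom ab w(1) by blast
qed

definition agree_at :: "'o \<Rightarrow> 'm \<Rightarrow> 'm \<Rightarrow> ('a \<Rightarrow> 'b) \<Rightarrow> ('a \<Rightarrow> 'b) \<Rightarrow> bool" where
  "agree_at k u u' \<phi> \<psi> \<longleftrightarrow> (\<forall>x\<in>obj U k. \<phi> (amap U u x) = \<psi> (amap U u' x))"

lemma germ_eq_iff_agree_at:
  "germ_eq U g g' \<longleftrightarrow> (\<exists>k u u'. u \<in> chom (idx U) (fst g) k \<and> u' \<in> chom (idx U) (fst g') k
     \<and> agree_at k u u' (snd g) (snd g'))"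
  unfolding germ_eq_def agree_at_def using chom_Ob by auto

lemma agree_at_ccomp:
  assumes "agree_at k u u' \<phi> \<psi>" "u \<in> chom (idx U) i k" "u' \<in> chom (idx U) i' k"
    "a \<in> chom (idx U) k m"
  shows "agree_at m (ccomp (idx U) a u) (ccomp (idx U) a u') \<phi> \<psi>"
  using assms amap_mem amap_ccomp unfolding agree_at_def by simp

lemma germ_eq_trans:
  assumes "germ_eq U g\<^sub>1 g\<^sub>2" "germ_eq U g\<^sub>2 g\<^sub>3"
  shows "germ_eq U g\<^sub>1 g\<^sub>3"
proof -
  obtain k u\<^sub>1 u\<^sub>2 where k: "u\<^sub>1 \<in> chom (idx U) (fst g\<^sub>1) k" "u\<^sub>2 \<in> chom (idx U) (fst g\<^sub>2) k"
    "agree_at k u\<^sub>1 u\<^sub>2 (snd g\<^sub>1) (snd g\<^sub>2)"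
    using assms(1) unfolding germ_eq_iff_agree_at by auto
  obtain k' v\<^sub>2 v\<^sub>3 where k': "v\<^sub>2 \<in> chom (idx U) (fst g\<^sub>2) k'" "v\<^sub>3 \<in> chom (idx U) (fst g\<^sub>3) k'"
    "agree_at k' v\<^sub>2 v\<^sub>3 (snd g\<^sub>2) (snd g\<^sub>3)"
    using assms(2) unfolding germ_eq_iff_agree_at by auto
  obtain m a b where m: "a \<in> chom (idx U) k m" "b \<in> chom (idx U) k' m"
    "ccomp (idx U) a u\<^sub>2 = ccomp (idx U) b v\<^sub>2"
    using span_completion[OF k(2) k'(1)] by blast
  have "agree_at m (ccomp (idx U) a u\<^sub>1) (ccomp (idx U) a u\<^sub>2) (snd g\<^sub>1) (snd g\<^sub>2)"
    "agree_at m (ccomp (idx U) b v\<^sub>2) (ccomp (idx U) b v\<^sub>3) (snd g\<^sub>2) (snd g\<^sub>3)"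
    using agree_at_ccomp k k' m by blast+
  then have "agree_at m (ccomp (idx U) a u\<^sub>1) (ccomp (idx U) b v\<^sub>3) (snd g\<^sub>1) (snd g\<^sub>3)"
    using m(3) unfolding agree_at_def by simp
  moreover have "ccomp (idx U) a u\<^sub>1 \<in> chom (idx U) (fst g\<^sub>1) m"
    "ccomp (idx U) b v\<^sub>3 \<in> chom (idx U) (fst g\<^sub>3) m"
    using ccomp_chom k k' m by blast+
  ultimately show ?thesis
    unfolding germ_eq_iff_agree_at by blast
qed

lemma germ_eq_restrict:
  assumes "u \<in> chom (idx U) i k" "\<And>x. x \<in> obj U k \<Longrightarrow> \<psi> x = \<phi> (amap U u x)"
  shows "germ_eq U (k, \<psi>) (i, \<phi>)"
proof -
  have k: "k \<in> Ob (idx U)" using chom_Ob assms(1) by blast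
  show ?thesis
    unfolding germ_eq_iff_agree_at agree_at_def
    by (intro exI[of _ k] exI[of _ "cid (idx U) k"] exI[of _ u])
      (simp add: k cid_chom amap_cid assms)
qed

lemma germ_eq_refl: "i \<in> Ob (idx U) \<Longrightarrow> germ_eq U (i, \<phi>) (i, \<phi>)"
  by (rule germ_eq_restrict[OF cid_chom]) (simp_all add: amap_cid)

lemma germ_eq_common_stage:
  assumes "germ_eq U (i, \<phi>) (i', \<psi>)" "germ_eq U (i, \<phi>') (i', \<psi>')"
  obtains k u u' where "u \<in> chom (idx U) i k" "u' \<in> chom (idx U) i' k"
    "agree_at k u u' \<phi> \<psi>" "agree_at k u u' \<phi>' \<psi>'"
proof -
  obtain k\<^sub>1 u\<^sub>1 u\<^sub>1' where 1: "u\<^sub>1 \<in> chom (idx U) i k\<^sub>1" "u\<^sub>1' \<in> chom (idx U) i' k\<^sub>1"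
    "agree_at k\<^sub>1 u\<^sub>1 u\<^sub>1' \<phi> \<psi>"
    using assms(1) unfolding germ_eq_iff_agree_at by auto
  obtain k\<^sub>2 u\<^sub>2 u\<^sub>2' where 2: "u\<^sub>2 \<in> chom (idx U) i k\<^sub>2" "u\<^sub>2' \<in> chom (idx U) i' k\<^sub>2"
    "agree_at k\<^sub>2 u\<^sub>2 u\<^sub>2' \<phi>' \<psi>'"
    using assms(2) unfolding germ_eq_iff_agree_at by auto
  obtain m a b where m: "a \<in> chom (idx U) k\<^sub>1 m" "b \<in> chom (idx U) k\<^sub>2 m"
    "ccomp (idx U) a u\<^sub>1 = ccomp (idx U) b u\<^sub>2"
    using span_completion[OF 1(1) 2(1)] by blast
  define u where "u = ccomp (idx U) a u\<^sub>1"
  define v where "v = ccomp (idx U) a u\<^sub>1'"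
  define v' where "v' = ccomp (idx U) b u\<^sub>2'"
  have chom: "u \<in> chom (idx U) i m" "v \<in> chom (idx U) i' m" "v' \<in> chom (idx U) i' m"
    unfolding u_def v_def v'_def using ccomp_chom 1 2 m by blast+
  have agree: "agree_at m u v \<phi> \<psi>" "agree_at m u v' \<phi>' \<psi>'"
    unfolding u_def v_def v'_def using agree_at_ccomp 1 2 m by (metis, metis)
  obtain n w where w: "w \<in> chom (idx U) m n" "ccomp (idx U) w v = ccomp (idx U) w v'"
    using equalizer[OF chom(2,3)] by blast
  show thesis
  proof
    show "ccomp (idx U) w u \<in> chom (idx U) i n" "ccomp (idx U) w v \<in> chom (idx U) i' n"
      using ccomp_chom chom w(1) by blast+
    show "agree_at n (ccomp (idx U) w u) (ccomp (idx U) w v) \<phi> \<psi>"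
      using agree_at_ccomp[OF agree(1) chom(1,2) w(1)] .
    show "agree_at n (ccomp (idx U) w u) (ccomp (idx U) w v) \<phi>' \<psi>'"
      using agree_at_ccomp[OF agree(2) chom(1,3) w(1)] w(2) by simp
  qed
qed

lemma germ_eq_pairI:
  assumes "germ_eq U (germ_map fst g) (germ_map fst g')" "germ_eq U (germ_map snd g) (germ_map snd g')"
  shows "germ_eq U g g'"
proof -
  obtain k u u' where "u \<in> chom (idx U) (fst g) k" "u' \<in> chom (idx U) (fst g') k"
    "agree_at k u u' (fst \<circ> snd g) (fst \<circ> snd g')" "agree_at k u u' (snd \<circ> snd g) (snd \<circ> snd g')"
    using germ_eq_common_stage assms unfolding germ_map_def by metis
  then show ?thesis
    unfolding germ_eq_iff_agree_at agree_at_def by (fastforce simp: prod_eq_iff)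
qed

end

lemma Rset_antimono: "1 \<le> a \<Longrightarrow> a \<le> b \<Longrightarrow> Rset b \<subseteq> Rset a"
proof
  fix p assume ab: "1 \<le> a" "a \<le> b" and p: "p \<in> Rset b"
  have "1 / real b \<le> 1 / real a" using ab by (simp add: frac_le)
  then show "p \<in> Rset a" using p unfolding Rset_def by auto
qed

lemma Rset_diag: "1 \<le> n \<Longrightarrow> (x, x) \<in> Rset n"
  unfolding Rset_def by auto

lemma Rset_swap: "p \<in> Rset n \<Longrightarrow> prod.swap p \<in> Rset n"
  by (cases p) (auto simp: Rset_def)

lemma Rset_double_comp:
  assumes "1 \<le> n" "(x, y) \<in> Rset (2 * n)" "(y, z) \<in> Rset (2 * n)"
  shows "(x, z) \<in> Rset n"
proof -
  have "1 / real (2 * n) + 1 / real (2 * n) = 1 / real n" using assms(1) by (simp add: field_simps)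
  then show ?thesis using assms unfolding Rset_def by auto
qed

lemma is_proset_Rpro: "is_proset Rpro"
  unfolding is_proset_def is_filtered_def is_category_def Rpro_def Rcat_def chom_def
  apply (auto simp: Pi_iff)
  subgoal for i j by (rule exI[of _ "max i j"]) auto
  subgoal using Rset_antimono by (metis One_nat_def subsetD)
  done

lemma is_pmor_incl: "is_pmor Rpro (const_pro UNIV) incl"
  unfolding is_pmor_def germ_eq_def Rpro_def Rcat_def const_pro_def unit_cat_def incl_def chom_def
  by auto

lemma is_pmor_Rpro_iff:
  "is_pmor U Rpro r \<longleftrightarrow> (\<forall>n\<ge>1. germ_into U (Rset n) (r n)) \<and>
     (\<forall>m n. 1 \<le> m \<and> m \<le> n \<longrightarrow> germ_eq U (r n) (r m))"
  unfolding is_pmor_def germ_into_def Rpro_def Rcat_def by (auto simp: comp_def)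

lemma pmor_eq_Rpro_iff: "pmor_eq U Rpro r s \<longleftrightarrow> (\<forall>n\<ge>1. germ_eq U (r n) (s n))"
  unfolding pmor_eq_def Rpro_def Rcat_def by auto

lemma pmor_eq_const_pro_iff: "pmor_eq U (const_pro S) F G \<longleftrightarrow> germ_eq U (F ()) (G ())"
  unfolding pmor_eq_def const_pro_def unit_cat_def by auto

lemma pcomp_incl: "pcomp incl r = (\<lambda>_. r 1)"
  unfolding pcomp_def incl_def by auto

lemma pcomp_pfst_const: "pcomp pfst (\<lambda>_. g) = (\<lambda>_. germ_map fst g)"
  unfolding pcomp_def pfst_def germ_map_def by auto

lemma pcomp_psnd_const: "pcomp psnd (\<lambda>_. g) = (\<lambda>_. germ_map snd g)"
  unfolding pcomp_def psnd_def germ_map_def by auto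

definition close_germs :: "('o, 'm, 'a) proset \<Rightarrow> nat \<Rightarrow> 'o \<times> ('a \<Rightarrow> real) \<Rightarrow> 'o \<times> ('a \<Rightarrow> real) \<Rightarrow> bool"
  where "close_germs U n a b \<longleftrightarrow>
    (\<exists>t. germ_into U (Rset n) t \<and> germ_eq U (germ_map fst t) a \<and> germ_eq U (germ_map snd t) b)"

context pro_set
begin

lemma close_germs_refl:
  assumes "i \<in> Ob (idx U)" "1 \<le> n"
  shows "close_germs U n (i, \<phi>) (i, \<phi>)"
proof -
  define t where "t = (i, \<lambda>x. (\<phi> x, \<phi> x))"
  have "germ_map fst t = (i, \<phi>)" "germ_map snd t = (i, \<phi>)"
    unfolding t_def germ_map_def by auto
  moreover have "germ_into U (Rset n) t"
    unfolding t_def germ_into_def using assms Rset_diag by auto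
  ultimately show ?thesis unfolding close_germs_def using germ_eq_refl assms(1) by metis
qed

lemma close_germs_sym: "close_germs U n a b \<Longrightarrow> close_germs U n b a"
proof -
  assume "close_germs U n a b"
  then obtain t where t: "germ_into U (Rset n) t" "germ_eq U (germ_map fst t) a"
    "germ_eq U (germ_map snd t) b" unfolding close_germs_def by blast
  have "germ_into U (Rset n) (germ_map prod.swap t)"
    using t(1) Rset_swap unfolding germ_into_def germ_map_def by (simp add: Pi_iff)
  moreover have "germ_map fst (germ_map prod.swap t) = germ_map snd t"
    "germ_map snd (germ_map prod.swap t) = germ_map fst t"
    unfolding germ_map_def by auto
  ultimately show ?thesis unfolding close_germs_def using t by metis
qed

lemma close_germs_trans:
  assumes n: "1 \<le> n" and ab: "close_germs U (2 * n) a b" and bc: "close_germs U (2 * n) b c"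
  shows "close_germs U n a c"
proof -
  obtain t where t: "germ_into U (Rset (2 * n)) t" "germ_eq U (germ_map fst t) a"
    "germ_eq U (germ_map snd t) b" using ab unfolding close_germs_def by blast
  obtain t' where t': "germ_into U (Rset (2 * n)) t'" "germ_eq U (germ_map fst t') b"
    "germ_eq U (germ_map snd t') c" using bc unfolding close_germs_def by blast
  have "germ_eq U (germ_map snd t) (germ_map fst t')"
    using germ_eq_trans germ_eq_sym t(3) t'(2) by blast
  then obtain k u u' where u: "u \<in> chom (idx U) (fst t) k" "u' \<in> chom (idx U) (fst t') k"
    and agree: "\<And>x. x \<in> obj U k \<Longrightarrow> snd (snd t (amap U u x)) = fst (snd t' (amap U u' x))"
    unfolding germ_eq_iff_agree_at agree_at_def germ_map_def by auto
  define s where "s = (k, \<lambda>x. (fst (snd t (amap U u x)), snd (snd t' (amap U u' x))))"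
  have "germ_into U (Rset n) s"
    unfolding germ_into_def s_def fst_conv snd_conv
  proof (intro conjI Pi_I)
    show "k \<in> Ob (idx U)" using chom_Ob u(1) by blast
    fix x assume x: "x \<in> obj U k"
    have "snd t (amap U u x) \<in> Rset (2 * n)" "snd t' (amap U u' x) \<in> Rset (2 * n)"
      using t(1) t'(1) amap_mem u x unfolding germ_into_def by auto
    then show "(fst (snd t (amap U u x)), snd (snd t' (amap U u' x))) \<in> Rset n"
      using Rset_double_comp[OF n] agree[OF x] by (metis prod.collapse)
  qed
  moreover have "germ_eq U (germ_map fst s) (germ_map fst t)"
    "germ_eq U (germ_map snd s) (germ_map snd t')"
    unfolding germ_map_def s_def by (auto intro!: germ_eq_restrict u)
  ultimately show ?thesis
    unfolding close_germs_def using germ_eq_trans t(2) t'(3) by blast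
qed

lemma Rpro_element_iff_close_germs:
  "(\<exists>r. is_pmor U Rpro r \<and> germ_eq U (germ_map fst (r 1)) a \<and> germ_eq U (germ_map snd (r 1)) b)
     \<longleftrightarrow> (\<forall>n\<ge>1. close_germs U n a b)"
proof
  assume "\<exists>r. is_pmor U Rpro r \<and> germ_eq U (germ_map fst (r 1)) a \<and> germ_eq U (germ_map snd (r 1)) b"
  then obtain r where r: "is_pmor U Rpro r" "germ_eq U (germ_map fst (r 1)) a"
    "germ_eq U (germ_map snd (r 1)) b" by blast
  show "\<forall>n\<ge>1. close_germs U n a b"
  proof (intro allI impI)
    fix n :: nat assume n: "1 \<le> n"
    then have "germ_into U (Rset n) (r n)" "germ_eq U (r n) (r 1)"
      using r(1) unfolding is_pmor_Rpro_iff by auto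
    then show "close_germs U n a b"
      unfolding close_germs_def using r(2,3) germ_eq_trans germ_eq_germ_map by blast
  qed
next
  assume "\<forall>n\<ge>1. close_germs U n a b"
  then obtain r where r: "\<And>n. 1 \<le> n \<Longrightarrow> germ_into U (Rset n) (r n) \<and>
      germ_eq U (germ_map fst (r n)) a \<and> germ_eq U (germ_map snd (r n)) b"
    unfolding close_germs_def by metis
  have "germ_eq U (r n) (r m)" if "1 \<le> m" "m \<le> n" for m n
    using r[of m] r[of n] that germ_eq_pairI germ_eq_trans germ_eq_sym by (meson order_trans)
  then have "is_pmor U Rpro r" unfolding is_pmor_Rpro_iff using r by blast
  then show "\<exists>r. is_pmor U Rpro r \<and> germ_eq U (germ_map fst (r 1)) a \<and> germ_eq U (germ_map snd (r 1)) b"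
    using r[of 1] by blast
qed

lemma incl_mono:
  assumes "is_pmor U Rpro r" "is_pmor U Rpro s"
    and "pmor_eq U (const_pro UNIV) (pcomp incl r) (pcomp incl s)"
  shows "pmor_eq U Rpro r s"
  unfolding pmor_eq_Rpro_iff
proof (intro allI impI)
  fix n :: nat assume "1 \<le> n"
  then have "germ_eq U (r n) (r 1)" "germ_eq U (s n) (s 1)"
    using assms(1,2) unfolding is_pmor_Rpro_iff by auto
  moreover have "germ_eq U (r 1) (s 1)"
    using assms(3) unfolding pcomp_incl pmor_eq_const_pro_iff .
  ultimately show "germ_eq U (r n) (s n)" using germ_eq_trans germ_eq_sym by blast
qed

lemma eqrel_wrt_Rpro: "eqrel_wrt U Rpro (UNIV :: real set) incl"
proof -
  have rel: "(\<exists>r. is_pmor U Rpro r \<and>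
      pmor_eq U (const_pro UNIV) (pcomp pfst (pcomp incl r)) a \<and>
      pmor_eq U (const_pro UNIV) (pcomp psnd (pcomp incl r)) b)
    \<longleftrightarrow> (\<forall>n\<ge>1. close_germs U n (a ()) (b ()))" for a b
    unfolding pcomp_incl pcomp_pfst_const pcomp_psnd_const pmor_eq_const_pro_iff
    by (rule Rpro_element_iff_close_germs)
  have refl: "close_germs U n (a ()) (a ())"
    if "is_pmor U (const_pro (UNIV :: real set)) a" "1 \<le> n" for a n
    using that close_germs_refl[of "fst (a ())" n "snd (a ())"]
    unfolding is_pmor_def const_pro_def unit_cat_def by auto
  have trans: "\<forall>n\<ge>1. close_germs U n a c"
    if "\<forall>n\<ge>1. close_germs U n a b" "\<forall>n\<ge>1. close_germs U n b c" for a b c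
  proof (intro allI impI)
    fix n :: nat assume n: "1 \<le> n"
    then have "1 \<le> 2 * n" by simp
    then show "close_germs U n a c" using close_germs_trans[OF n] that by blast
  qed
  show ?thesis
    unfolding eqrel_wrt_def Let_def rel UNIV_Times_UNIV
    using incl_mono refl close_germs_sym trans by blast
qed

end

lemma constant_if_locally_constant:
  fixes h :: "real \<Rightarrow> 'b"
  assumes d: "d > 0" and h: "\<And>x y. \<bar>x - y\<bar> < d \<Longrightarrow> h x = h y"
  shows "h x = h y"
proof -
  obtain N :: nat where N: "\<bar>y - x\<bar> / d < real N" using reals_Archimedean2 by blast
  then have "N > 0" using d by (intro gr0I) (simp add: divide_less_0_iff)
  define e where "e = (y - x) / real N"
  have e: "\<bar>e\<bar> < d" using N d \<open>N > 0\<close> unfolding e_def by (simp add: field_simps abs_divide)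
  have "h x = h (x + real k * e)" for k
  proof (induction k)
    case (Suc k)
    have "h (x + real k * e) = h (x + real (Suc k) * e)"
      using h e by (simp add: algebra_simps)
    then show ?case using Suc.IH by simp
  qed simp
  moreover have "x + real N * e = y" using \<open>N > 0\<close> unfolding e_def by simp
  ultimately show ?thesis by metis
qed

lemma kernel_pair_UNIV_if_contains_Rpro:
  fixes f :: "'p \<Rightarrow> unit \<times> (real \<Rightarrow> 'b)" and X :: "('p, 'q, 'b) proset"
  assumes "pmor_eq Rpro X (pcomp f (pcomp pfst incl)) (pcomp f (pcomp psnd incl))"
  shows "pmor_eq (const_pro UNIV) X (pcomp f pfst) (pcomp f psnd)"
  unfolding pmor_eq_def
proof
  fix j assume j: "j \<in> Ob (idx X)"
  define h where "h = snd (f j)"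
  have "germ_eq Rpro (1, h \<circ> fst) (1, h \<circ> snd)"
    using assms j unfolding pmor_eq_def pcomp_def pfst_def psnd_def incl_def h_def by auto
  then obtain n :: nat where n: "1 \<le> n" "\<And>p. p \<in> Rset n \<Longrightarrow> h (fst p) = h (snd p)"
    unfolding germ_eq_def Rpro_def Rcat_def chom_def by auto
  have "h x = h y" for x y
  proof (rule constant_if_locally_constant[of "1 / real n"])
    show "0 < 1 / real n" using n(1) by simp
    fix x y :: real assume "\<bar>x - y\<bar> < 1 / real n"
    then have "(x, y) \<in> Rset n" unfolding Rset_def by (simp add: abs_less_iff)
    then show "h x = h y" using n(2) by fastforce
  qed
  then show "germ_eq (const_pro UNIV) (pcomp f pfst j) (pcomp f psnd j)"
    unfolding germ_eq_def pcomp_def pfst_def psnd_def const_pro_def unit_cat_def chom_def h_def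
    by auto
qed

lemma incl_no_right_inverse:
  "\<nexists>g. is_pmor (const_pro UNIV) Rpro g \<and>
     pmor_eq (const_pro UNIV) (const_pro (UNIV :: (real \<times> real) set)) (pcomp incl g) pid"
proof
  assume "\<exists>g. is_pmor (const_pro UNIV) Rpro g \<and>
     pmor_eq (const_pro UNIV) (const_pro (UNIV :: (real \<times> real) set)) (pcomp incl g) pid"
  then obtain g where g: "is_pmor (const_pro UNIV) Rpro g"
    "pmor_eq (const_pro UNIV) (const_pro (UNIV :: (real \<times> real) set)) (pcomp incl g) pid" by blast
  have "snd (g 1) p \<in> Rset 1" for p
    using g(1) unfolding is_pmor_def Rpro_def Rcat_def const_pro_def by auto
  moreover have "snd (g 1) p = p" for p
  proof -
    have "germ_eq (const_pro UNIV) (g 1) ((), id)"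
      using g(2) unfolding pmor_eq_const_pro_iff pcomp_incl pid_def .
    then show ?thesis unfolding germ_eq_def const_pro_def unit_cat_def by (cases p) auto
  qed
  ultimately have "(0, 2) \<in> Rset 1" by metis
  then show False unfolding Rset_def by simp
qed

theorem mainTheorem14:
  fixes U :: "('o, 'm, 'a) proset"
    and X :: "('p, 'q, 'b) proset"
    and f :: "'p \<Rightarrow> unit \<times> (real \<Rightarrow> 'b)"
  shows
    "is_proset Rpro \<and> is_pmor Rpro (const_pro (UNIV :: (real \<times> real) set)) incl
     \<and> (is_proset U \<longrightarrow> eqrel_wrt U Rpro (UNIV :: real set) incl)
     \<and> (is_proset X \<and> is_pmor (const_pro (UNIV :: real set)) X f
         \<and> pmor_eq Rpro X (pcomp f (pcomp pfst incl)) (pcomp f (pcomp psnd incl))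
         \<longrightarrow> pmor_eq (const_pro (UNIV :: (real \<times> real) set)) X (pcomp f pfst) (pcomp f psnd))
     \<and> \<not> (\<exists>g. is_pmor (const_pro (UNIV :: (real \<times> real) set)) Rpro g
            \<and> pmor_eq (const_pro (UNIV :: (real \<times> real) set)) (const_pro (UNIV :: (real \<times> real) set))
                 (pcomp incl g) pid
            \<and> pmor_eq Rpro Rpro (pcomp g incl) pid)"
  using is_proset_Rpro is_pmor_incl pro_set.eqrel_wrt_Rpro[unfolded pro_set_def]
    kernel_pair_UNIV_if_contains_Rpro incl_no_right_inverse
  by blast

end
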